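(* Let $F$ be a finite field with $q$ elements and let $C\subseteq F^n$ be a balanced code with information length $d$. For a positive integer $n'$, let $C^{n'}=\{(\mathbf{c}_1,\dots,\mathbf{c}_{n'})\mid \mathbf{c}_i\in C\}\subseteq (F^n)^{n'}=F^{nn'}$. Then $C^{n'}$ is a balanced code of $F^{nn'}$ with information length $dn'$; in particular, if $0\le\delta\le 1-q^{-1}$, then $|(C^{n'})^{\le\delta}|\le q^{dn'h_q(\delta)}$, where $(C^{n'})^{\le\delta}$ is the set of codewords of $C^{n'}$ with relative weight at most $\delta$.
   Context: The relative weight of $\mathbf{a}\in F^N$ is $\mathrm{w}(\mathbf{a})/N$ where $\mathrm{w}$ is Hamming weight. For $I=\{1,\dots,N\}$ and a subset $I'=\{i_1<\dots<i_d\}$, the projection $F^I\to F^{I'}$ sends $(a_1,\dots,a_N)$ to $(a_{i_1},\dots,a_{i_d})$. A subset $C\subseteq F^N$ is a balanced code with information length $d$ if there exist subsets $I_1,\dots,I_s$ of $I$ (repetitions allowed), each of cardinality $d$, and an integer $t$ such that (i) every index $i\in I$ lies in exactly $t$ of the sets $I_j$; (ii) for each $j$, the projection $F^I\to F^{I_j}$ maps $C$ bijectively onto $F^{I_j}$. The $q$-ary entropy is $h_q(x)=x\log_q(q-1)-x\log_q x-(1-x)\log_q(1-x)$ with $0\log_q0=0$. *)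

theory Defs
  imports Complex_Main "HOL-Library.Cardinality"
begin

text \<open>Words of F^N are lists of length N over F; indices are 0,...,N-1.
  The projection onto an index subset I' is nths (keeps entries at positions
  in I', in increasing order).\<close>

definition hamming_weight :: "'a::zero list \<Rightarrow> nat" where
  "hamming_weight a = card {i. i < length a \<and> a ! i \<noteq> 0}"

definition relative_weight :: "'a::zero list \<Rightarrow> real" where
  "relative_weight a = real (hamming_weight a) / real (length a)"

definition words :: "nat \<Rightarrow> 'a list set" where
  "words N = {a. length a = N}"

definition balanced_code :: "nat \<Rightarrow> nat \<Rightarrow> 'a list set \<Rightarrow> bool" where
  "balanced_code N d C \<longleftrightarrow> C \<subseteq> words N \<and>
     (\<exists>(Is :: nat set list) (t :: nat). Is \<noteq> [] \<and>
        (\<forall>I\<in>set Is. I \<subseteq> {0..<N} \<and> card I = d) \<and>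
        (\<forall>i<N. length (filter (\<lambda>I. i \<in> I) Is) = t) \<and>
        (\<forall>I\<in>set Is. bij_betw (\<lambda>a. nths a I) C (words d)))"

definition entropy_q :: "real \<Rightarrow> real \<Rightarrow> real" where
  "entropy_q q x = x * log q (q - 1)
     - (if x = 0 then 0 else x * log q x)
     - (if x = 1 then 0 else (1 - x) * log q (1 - x))"

definition code_power :: "'a list set \<Rightarrow> nat \<Rightarrow> 'a list set" where
  "code_power C m = {concat cs | cs. length cs = m \<and> set cs \<subseteq> C}"

definition low_weight_part :: "'a::zero list set \<Rightarrow> real \<Rightarrow> 'a list set" where
  "low_weight_part C \<delta> = {c \<in> C. relative_weight c \<le> \<delta>}"

end

theory Submission
  imports Defs "HOL-Analysis.Convex"
begin

text \<open>Weight each letter by f 0 = 1 - \<delta> and f x = \<delta> / (q - 1) otherwise, so that the weights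
  sum to 1 and (\<delta> / (q - 1)) ^ \<delta> * (1 - \<delta>) ^ (1 - \<delta>) = q ^ (- h_q \<delta>). Each projection
  I_j maps C bijectively onto F^d, so the sum over C of the weight of the I_j-part of c is 1.
  Every position lies in exactly t of the s sets, whence d s = t N, and the AM-GM inequality over
  the s projections yields a Shearer-type inequality: the sum over C of (weight of c) ^ (d / N)
  is at most 1. A word of relative weight at most \<delta> has weight at least q ^ (- N h_q \<delta>),
  which gives the counting bound. For C^n' the sets I_j copied into each of the n' blocks of
  length n form a balancing family again.\<close>

lemma prod_list_nths:
  fixes f :: "'a \<Rightarrow> 'b::comm_monoid_mult"
  shows "prod_list (map f (nths xs I)) = (\<Prod>i \<in> I \<inter> {..<length xs}. f (xs ! i))"
proof (induction xs arbitrary: I)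
  case (Cons x xs)
  let ?J = "{j. Suc j \<in> I}"
  have split: "I \<inter> {..<length (x # xs)} = (I \<inter> {0}) \<union> Suc ` (?J \<inter> {..<length xs})"
    by (auto simp: less_Suc_eq_0_disj)
  have "(\<Prod>i \<in> Suc ` (?J \<inter> {..<length xs}). f ((x # xs) ! i)) = (\<Prod>i \<in> ?J \<inter> {..<length xs}. f (xs ! i))"
    by (subst prod.reindex) auto
  then have "(\<Prod>i \<in> I \<inter> {..<length (x # xs)}. f ((x # xs) ! i)) =
      (\<Prod>i \<in> I \<inter> {0}. f ((x # xs) ! i)) * (\<Prod>i \<in> ?J \<inter> {..<length xs}. f (xs ! i))"
    unfolding split by (subst prod.union_disjoint) auto
  moreover have "(\<Prod>i \<in> I \<inter> {0}. f ((x # xs) ! i)) = (if 0 \<in> I then f x else 1)"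
    by (cases "0 \<in> I") (auto simp: Int_absorb1 Int_absorb2)
  ultimately show ?case
    using Cons.IH[of ?J] by (simp add: nths_Cons)
qed simp

lemma sum_prod_list_words:
  fixes f :: "'a::finite \<Rightarrow> 'b::comm_semiring_1"
  shows "(\<Sum>y \<in> words d. prod_list (map f y)) = (\<Sum>x\<in>UNIV. f x) ^ d"
proof (induction d)
  case 0
  then show ?case by (simp add: words_def)
next
  case (Suc d)
  have words_Suc: "words (Suc d) = (\<lambda>(x, y). x # y) ` (UNIV \<times> words d)"
    by (auto simp: words_def image_iff length_Suc_conv)
  have "inj_on (\<lambda>(x, y). x # y) (UNIV \<times> words d)"
    by (auto simp: inj_on_def)
  then have "(\<Sum>y \<in> words (Suc d). prod_list (map f y)) =
      (\<Sum>p \<in> UNIV \<times> words d. prod_list (map f ((\<lambda>(x, y). x # y) p)))"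
    unfolding words_Suc by (rule sum.reindex[unfolded comp_def])
  also have "\<dots> = (\<Sum>(x, y) \<in> UNIV \<times> words d. f x * prod_list (map f y))"
    by (rule sum.cong) auto
  also have "\<dots> = (\<Sum>x\<in>UNIV. f x) * (\<Sum>y \<in> words d. prod_list (map f y))"
    by (simp add: sum_product sum.cartesian_product)
  finally show ?case using Suc by simp
qed

lemma sum_prod_projection:
  fixes f :: "'a::finite \<Rightarrow> 'b::comm_semiring_1"
  assumes C: "C \<subseteq> words N" and I: "I \<subseteq> {..<N}" and bij: "bij_betw (\<lambda>c. nths c I) C (words d)"
  shows "(\<Sum>c\<in>C. \<Prod>i\<in>I. f (c ! i)) = (\<Sum>x\<in>UNIV. f x) ^ d"
proof -
  have "(\<Sum>c\<in>C. \<Prod>i\<in>I. f (c ! i)) = (\<Sum>c\<in>C. prod_list (map f (nths c I)))"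
  proof (rule sum.cong)
    fix c assume "c \<in> C"
    then have "I \<inter> {..<length c} = I" using C I by (auto simp: words_def)
    then show "(\<Prod>i\<in>I. f (c ! i)) = prod_list (map f (nths c I))"
      by (simp add: prod_list_nths)
  qed simp
  also have "\<dots> = (\<Sum>y \<in> words d. prod_list (map f y))"
    using bij by (rule sum.reindex_bij_betw)
  finally show ?thesis by (simp add: sum_prod_list_words)
qed

lemma prod_prod_eq_prod_power_card:
  fixes h :: "'i \<Rightarrow> 'b::comm_monoid_mult"
  assumes "finite J" "finite U" "\<And>j. j \<in> J \<Longrightarrow> A j \<subseteq> U"
  shows "(\<Prod>j\<in>J. prod h (A j)) = (\<Prod>i\<in>U. h i ^ card {j\<in>J. i \<in> A j})"
proof -
  have "(\<Prod>j\<in>J. prod h (A j)) = (\<Prod>j\<in>J. \<Prod>i\<in>U. if i \<in> A j then h i else 1)"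
  proof (rule prod.cong)
    fix j assume "j \<in> J"
    then have "{i\<in>U. i \<in> A j} = A j" using assms(3) by blast
    then show "prod h (A j) = (\<Prod>i\<in>U. if i \<in> A j then h i else 1)"
      using prod.inter_filter[OF assms(2), of h "\<lambda>i. i \<in> A j"] by simp
  qed simp
  also have "\<dots> = (\<Prod>i\<in>U. \<Prod>j\<in>J. if i \<in> A j then h i else 1)"
    by (rule prod.swap)
  also have "\<dots> = (\<Prod>i\<in>U. h i ^ card {j\<in>J. i \<in> A j})"
  proof (rule prod.cong)
    fix i
    show "(\<Prod>j\<in>J. if i \<in> A j then h i else 1) = h i ^ card {j\<in>J. i \<in> A j}"
      using prod.inter_filter[OF assms(1), of "\<lambda>_. h i" "\<lambda>j. i \<in> A j"] by simp
  qed simp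
  finally show ?thesis .
qed

lemma balanced_codeE:
  assumes "balanced_code N d C"
  obtains Is t where "C \<subseteq> words N" "Is \<noteq> []"
    and "\<And>I. I \<in> set Is \<Longrightarrow> I \<subseteq> {..<N}" and "\<And>I. I \<in> set Is \<Longrightarrow> card I = d"
    and "\<And>i. i < N \<Longrightarrow> length (filter (\<lambda>I. i \<in> I) Is) = t"
    and "\<And>I. I \<in> set Is \<Longrightarrow> bij_betw (\<lambda>c. nths c I) C (words d)"
  using assms unfolding balanced_code_def atLeast0LessThan by metis

lemma balanced_code_sum_powr_le:
  fixes C :: "'a::finite list set" and f :: "'a \<Rightarrow> real"
  assumes bal: "balanced_code N d C" and "N > 0" and f_pos: "\<And>x. f x > 0"
  shows "(\<Sum>c\<in>C. (\<Prod>i<N. f (c ! i)) powr (real d / real N)) \<le> (\<Sum>x\<in>UNIV. f x) ^ d"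
proof -
  obtain Is t where C: "C \<subseteq> words N" and "Is \<noteq> []"
    and sub: "\<And>I. I \<in> set Is \<Longrightarrow> I \<subseteq> {..<N}" and card_I: "\<And>I. I \<in> set Is \<Longrightarrow> card I = d"
    and count: "\<And>i. i < N \<Longrightarrow> length (filter (\<lambda>I. i \<in> I) Is) = t"
    and bij: "\<And>I. I \<in> set Is \<Longrightarrow> bij_betw (\<lambda>c. nths c I) C (words d)"
    using bal by (rule balanced_codeE) blast
  define s where "s = length Is"
  have "s > 0" using \<open>Is \<noteq> []\<close> by (simp add: s_def)
  have count': "card {j\<in>{..<s}. i \<in> Is ! j} = t" if "i < N" for i
    using count[OF that] by (simp add: length_filter_conv_card s_def)
  have "(\<Sum>i\<in>{..<N}. card {j\<in>{..<s}. i \<in> Is ! j}) = d * card {..<s}"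
  proof (rule sum_multicount)
    show "\<forall>j\<in>{..<s}. card {i\<in>{..<N}. i \<in> Is ! j} = d"
    proof
      fix j assume "j \<in> {..<s}"
      then have "Is ! j \<in> set Is" by (simp add: s_def)
      moreover from this have "{i\<in>{..<N}. i \<in> Is ! j} = Is ! j" using sub by blast
      ultimately show "card {i\<in>{..<N}. i \<in> Is ! j} = d" using card_I by simp
    qed
  qed simp_all
  then have double_count: "real t / real s = real d / real N"
    using count' \<open>s > 0\<close> \<open>N > 0\<close> by (simp add: field_simps flip: of_nat_mult)
  define g where "g c j = (\<Prod>i\<in>Is ! j. f (c ! i))" for c j
  have "(\<Prod>i<N. f (c ! i)) powr (real d / real N) = (\<Prod>j<s. g c j) powr (1 / real s)" for c
  proof -
    have "(\<Prod>j<s. g c j) = (\<Prod>i<N. f (c ! i) ^ card {j\<in>{..<s}. i \<in> Is ! j})"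
      unfolding g_def using sub by (intro prod_prod_eq_prod_power_card) (auto simp: s_def)
    also have "\<dots> = (\<Prod>i<N. f (c ! i)) ^ t"
      unfolding prod_power_distrib by (rule prod.cong) (use count' in auto)
    finally show ?thesis
      using f_pos by (simp add: prod_pos powr_realpow[symmetric] powr_powr double_count)
  qed
  also have "\<dots> c \<le> (\<Sum>j<s. g c j / real s)" for c
    using arith_geom_mean[of "{..<s}" "g c"] \<open>s > 0\<close> f_pos
    unfolding g_def by (auto intro: prod_nonneg less_imp_le)
  finally have "(\<Sum>c\<in>C. (\<Prod>i<N. f (c ! i)) powr (real d / real N)) \<le> (\<Sum>c\<in>C. \<Sum>j<s. g c j / real s)"
    by (intro sum_mono)
  also have "\<dots> = (\<Sum>j<s. (\<Sum>c\<in>C. g c j) / real s)"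
    by (subst sum.swap) (simp add: sum_divide_distrib)
  also have "\<dots> = (\<Sum>j<s. (\<Sum>x\<in>UNIV. f x) ^ d / real s)"
    unfolding g_def using C sub bij by (intro sum.cong) (auto simp: s_def sum_prod_projection)
  also have "\<dots> = (\<Sum>x\<in>UNIV. f x) ^ d"
    using \<open>s > 0\<close> by simp
  finally show ?thesis .
qed

lemma prod_if_zero_eq_power_weight:
  fixes c :: "'a::zero list" and a b :: "'b::comm_monoid_mult"
  shows "(\<Prod>i<length c. if c ! i = 0 then b else a) = a ^ hamming_weight c * b ^ (length c - hamming_weight c)"
proof -
  define S where "S = {i. i < length c \<and> c ! i \<noteq> 0}"
  have "{..<length c} \<inter> - {i. c ! i = 0} = S" "{..<length c} \<inter> {i. c ! i = 0} = {..<length c} - S"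
    by (auto simp: S_def)
  moreover have "card ({..<length c} - S) = length c - card S"
    by (subst card_Diff_subset) (auto simp: S_def)
  ultimately show ?thesis
    by (simp add: prod.If_cases hamming_weight_def S_def[symmetric] mult.commute)
qed

lemma exp_le_prod_if_zero:
  fixes c :: "'a::zero list"
  assumes "0 < a" "a \<le> b" "c \<noteq> []" "relative_weight c \<le> \<delta>"
  shows "exp (real (length c) * (\<delta> * ln a + (1 - \<delta>) * ln b)) \<le> (\<Prod>i<length c. if c ! i = 0 then b else a)"
proof -
  define N w where "N = length c" and "w = hamming_weight c"
  have "w \<le> N"
    unfolding N_def w_def hamming_weight_def by (rule card_mono[of "{..<length c}", simplified]) auto
  have "real w \<le> \<delta> * real N"
    using assms(3,4) by (simp add: N_def w_def relative_weight_def divide_le_eq)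
  moreover have "ln a \<le> ln b" using assms(1,2) by simp
  ultimately have "(real w - \<delta> * real N) * (ln a - ln b) \<ge> 0"
    by (intro mult_nonpos_nonpos) auto
  then have "real N * (\<delta> * ln a + (1 - \<delta>) * ln b) \<le> ln (a ^ w * b ^ (N - w))"
    using assms(1,2) \<open>w \<le> N\<close> by (simp add: ln_mult ln_realpow of_nat_diff algebra_simps)
  then have "exp (real N * (\<delta> * ln a + (1 - \<delta>) * ln b)) \<le> a ^ w * b ^ (N - w)"
    using assms(1,2) by (simp add: ln_ge_iff)
  then show ?thesis
    by (simp add: N_def w_def prod_if_zero_eq_power_weight)
qed

lemma entropy_q_mult_ln:
  assumes "0 < \<delta>" "\<delta> < 1" "1 < q"
  shows "entropy_q q \<delta> * ln q = - (\<delta> * ln (\<delta> / (q - 1)) + (1 - \<delta>) * ln (1 - \<delta>))"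
  using assms unfolding entropy_q_def by (simp add: log_def ln_div field_simps)

lemma two_le_card_field: "2 \<le> CARD('a::{finite, field})"
  using card_mono[of UNIV "{0::'a, 1}"] by simp

lemma low_weight_part_zero_subset:
  "C \<subseteq> words N \<Longrightarrow> low_weight_part C 0 \<subseteq> {replicate N 0}"
  by (auto simp: low_weight_part_def words_def relative_weight_def hamming_weight_def
      divide_le_0_iff intro: replicate_eqI elim: in_set_conv_nth[THEN iffD1, elim_format])

lemma card_low_weight_part_le_pos:
  fixes C :: "'a::{finite, field} list set"
  assumes bal: "balanced_code N d C" and "N > 0" and "0 < \<delta>"
    and \<delta>_le: "\<delta> \<le> 1 - 1 / real CARD('a)"
  defines "q \<equiv> real CARD('a)"
  shows "real (card (low_weight_part C \<delta>)) \<le> q powr (real d * entropy_q q \<delta>)"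
proof -
  have "q \<ge> 2" using two_le_card_field[where 'a = 'a] by (simp add: q_def)
  then have "\<delta> < 1" using \<delta>_le q_def by (smt (verit) divide_pos_pos)
  have "\<delta> \<le> (1 - \<delta>) * (q - 1)"
    using \<delta>_le \<open>q \<ge> 2\<close> by (simp add: q_def field_simps)
  define a b where "a = \<delta> / (q - 1)" and "b = 1 - \<delta>"
  define f where "f x = (if x = 0 then b else a)" for x :: 'a
  define L where "L = \<delta> * ln a + (1 - \<delta>) * ln b"
  have "0 < a" "a \<le> b" "0 < b"
    using \<open>q \<ge> 2\<close> \<open>0 < \<delta>\<close> \<open>\<delta> < 1\<close> \<open>\<delta> \<le> (1 - \<delta>) * (q - 1)\<close>
    by (auto simp: a_def b_def pos_divide_le_eq)
  have "(\<Sum>x\<in>UNIV. f x) = b + (q - 1) * a"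
    by (simp add: f_def sum.If_cases q_def of_nat_diff Compl_eq_Diff_UNIV)
  then have sum_f: "(\<Sum>x\<in>UNIV. f x) = 1"
    using \<open>q \<ge> 2\<close> by (simp add: a_def b_def)
  have C: "C \<subseteq> words N" using bal by (rule balanced_codeE)
  then have "finite C"
    using finite_lists_length_eq[of "UNIV :: 'a set" N] by (auto simp: words_def intro: finite_subset)
  have low: "exp (real d * L) \<le> (\<Prod>i<N. f (c ! i)) powr (real d / real N)"
    if "c \<in> low_weight_part C \<delta>" for c
  proof -
    have "length c = N" "relative_weight c \<le> \<delta>"
      using that C by (auto simp: low_weight_part_def words_def)
    then have "exp (real N * L) \<le> (\<Prod>i<N. f (c ! i))"
      using exp_le_prod_if_zero[of a b c \<delta>] \<open>0 < a\<close> \<open>a \<le> b\<close> \<open>N > 0\<close>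
      by (auto simp: L_def f_def)
    then have "exp (real N * L) powr (real d / real N) \<le> (\<Prod>i<N. f (c ! i)) powr (real d / real N)"
      by (intro powr_mono2) auto
    then show ?thesis
      using \<open>N > 0\<close> by (simp add: powr_def)
  qed
  have "real (card (low_weight_part C \<delta>)) * exp (real d * L)
      \<le> (\<Sum>c\<in>low_weight_part C \<delta>. (\<Prod>i<N. f (c ! i)) powr (real d / real N))"
    using sum_mono[OF low] by simp
  also have "\<dots> \<le> (\<Sum>c\<in>C. (\<Prod>i<N. f (c ! i)) powr (real d / real N))"
    using \<open>finite C\<close> by (intro sum_mono2) (auto simp: low_weight_part_def)
  also have "\<dots> \<le> 1"
    using balanced_code_sum_powr_le[OF bal \<open>N > 0\<close>, of f] \<open>0 < a\<close> \<open>0 < b\<close>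
    by (simp add: f_def[abs_def] sum_f[unfolded f_def])
  finally have "real (card (low_weight_part C \<delta>)) \<le> exp (- (real d * L))"
    by (simp add: exp_minus field_simps)
  also have "\<dots> = q powr (real d * entropy_q q \<delta>)"
  proof -
    have "entropy_q q \<delta> * ln q = - L"
      using entropy_q_mult_ln[OF \<open>0 < \<delta>\<close> \<open>\<delta> < 1\<close>, of q] \<open>q \<ge> 2\<close>
      by (simp add: L_def a_def b_def)
    then have "real d * entropy_q q \<delta> * ln q = - (real d * L)"
      by (simp only: mult.assoc)
    then show ?thesis
      using \<open>q \<ge> 2\<close> by (simp add: powr_def)
  qed
  finally show ?thesis .
qed

lemma card_low_weight_part_le:
  fixes C :: "'a::{finite, field} list set"
  assumes bal: "balanced_code N d C" and "0 \<le> \<delta>" and "\<delta> \<le> 1 - 1 / real CARD('a)"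
  shows "real (card (low_weight_part C \<delta>)) \<le> real CARD('a) powr (real d * entropy_q (real CARD('a)) \<delta>)"
proof -
  obtain Is where C: "C \<subseteq> words N" and "Is \<noteq> []"
    and sub: "\<And>I. I \<in> set Is \<Longrightarrow> I \<subseteq> {..<N}" and card_I: "\<And>I. I \<in> set Is \<Longrightarrow> card I = d"
    using bal by (rule balanced_codeE) blast
  have card_le_1: "real (card (low_weight_part C \<delta>)) \<le> 1" if "low_weight_part C \<delta> \<subseteq> {c}" for c
    using card_mono[OF _ that] by simp
  consider "N = 0" | "\<delta> = 0" | "N > 0" "0 < \<delta>"
    using \<open>0 \<le> \<delta>\<close> by fastforce
  then show ?thesis
  proof cases
    case 1
    then have "d = 0" using sub[of "hd Is"] card_I[of "hd Is"] hd_in_set[OF \<open>Is \<noteq> []\<close>] by simp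
    moreover have "low_weight_part C \<delta> \<subseteq> {[]}"
      using C 1 by (auto simp: low_weight_part_def words_def)
    ultimately show ?thesis using card_le_1 by simp
  next
    case 2
    then show ?thesis
      using card_le_1 low_weight_part_zero_subset[OF C] by (simp add: entropy_q_def)
  next
    case 3
    then show ?thesis using card_low_weight_part_le_pos[OF bal] assms by simp
  qed
qed

definition block_indices :: "nat \<Rightarrow> nat \<Rightarrow> nat set \<Rightarrow> nat set" where
  "block_indices n k I = {i. i < n * k \<and> i mod n \<in> I}"

lemma block_indices_eq_image:
  assumes "I \<subseteq> {..<n}"
  shows "block_indices n k I = (\<lambda>(b, i). b * n + i) ` ({..<k} \<times> I)"
proof (intro set_eqI iffI)
  fix i assume i: "i \<in> block_indices n k I"
  then have "n > 0" by (cases n) (auto simp: block_indices_def)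
  with i have "i div n < k" "i = (i div n) * n + i mod n" "i mod n \<in> I"
    by (auto simp: block_indices_def div_less_iff_less_mult mult.commute)
  then show "i \<in> (\<lambda>(b, i). b * n + i) ` ({..<k} \<times> I)" by force
next
  fix x assume "x \<in> (\<lambda>(b, i). b * n + i) ` ({..<k} \<times> I)"
  then obtain b i where b: "b < k" and i: "i \<in> I" and x: "x = b * n + i" by auto
  have "i < n" using i assms by auto
  then have "x < Suc b * n" using x by simp
  also have "\<dots> \<le> n * k" using b by (metis Suc_leI mult.commute mult_le_mono2)
  finally show "x \<in> block_indices n k I" using i x \<open>i < n\<close> by (simp add: block_indices_def)
qed

lemma card_block_indices:
  assumes "I \<subseteq> {..<n}"
  shows "card (block_indices n k I) = k * card I"
proof -
  have "inj_on (\<lambda>(b, i). b * n + i) ({..<k} \<times> I)"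
  proof (rule inj_onI, clarsimp)
    fix b i b' i' assume "i \<in> I" "i' \<in> I" and eq: "b * n + i = b' * n + i'"
    then have "i < n" "i' < n" using assms by auto
    then show "b = b' \<and> i = i'"
      using arg_cong[OF eq, of "\<lambda>x. x div n"] arg_cong[OF eq, of "\<lambda>x. x mod n"] by simp
  qed
  then show ?thesis
    by (simp add: block_indices_eq_image[OF assms] card_image card_cartesian_product)
qed

lemma nths_cong:
  "(\<And>i. i < length xs \<Longrightarrow> i \<in> A \<longleftrightarrow> i \<in> B) \<Longrightarrow> nths xs A = nths xs B"
proof (induction xs arbitrary: A B)
  case (Cons x xs)
  have "nths xs {j. Suc j \<in> A} = nths xs {j. Suc j \<in> B}"
    by (rule Cons.IH) (use Cons.prems in auto)
  with Cons.prems[of 0] show ?case by (simp add: nths_Cons)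
qed simp

lemma nths_concat_block_indices:
  "\<forall>c\<in>set cs. length c = n \<Longrightarrow>
    nths (concat cs) (block_indices n (length cs) I) = concat (map (\<lambda>c. nths c I) cs)"
proof (induction cs)
  case (Cons c cs)
  then have len: "length c = n" by simp
  have "nths c (block_indices n (Suc (length cs)) I) = nths c I"
    by (rule nths_cong) (simp add: block_indices_def len)
  moreover have "{j. j + n \<in> block_indices n (Suc (length cs)) I} = block_indices n (length cs) I"
    by (auto simp: block_indices_def)
  ultimately show ?case using Cons by (simp add: nths_append len)
qed simp

lemma bij_betw_map_lists:
  assumes "bij_betw f A B"
  shows "bij_betw (map f) {xs \<in> lists A. length xs = k} {ys \<in> lists B. length ys = k}"
  unfolding bij_betw_def
proof (intro conjI inj_onI subset_antisym subsetI)
  fix xs ys assume "xs \<in> {xs \<in> lists A. length xs = k}" "ys \<in> {xs \<in> lists A. length xs = k}"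
    and "map f xs = map f ys"
  moreover have "inj_on f (set xs \<union> set ys)"
    using assms \<open>xs \<in> _\<close> \<open>ys \<in> _\<close> by (auto simp: bij_betw_def intro: inj_on_subset)
  ultimately show "xs = ys" by (simp add: inj_on_map_eq_map)
next
  fix ys assume "ys \<in> map f ` {xs \<in> lists A. length xs = k}"
  with assms show "ys \<in> {ys \<in> lists B. length ys = k}" by (auto simp: bij_betw_def)
next
  fix ys assume ys: "ys \<in> {ys \<in> lists B. length ys = k}"
  with assms have "map f (map (inv_into A f) ys) = ys"
    by (auto simp: bij_betw_def f_inv_into_f intro: map_idI)
  moreover have "map (inv_into A f) ys \<in> {xs \<in> lists A. length xs = k}"
    using ys assms by (auto simp: bij_betw_def inv_into_into)
  ultimately show "ys \<in> map f ` {xs \<in> lists A. length xs = k}" by (metis image_eqI)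
qed

lemma concat_image_words:
  "concat ` {xs \<in> lists (words m). length xs = k} = words (m * k)"
proof (intro subset_antisym subsetI)
  fix y assume "y \<in> concat ` {xs \<in> lists (words m). length xs = k}"
  then obtain xs where "y = concat xs" "xs \<in> lists (words m)" "length xs = k" by blast
  then have "map length xs = replicate k m" by (auto simp: words_def intro: replicate_eqI)
  with \<open>y = concat xs\<close> show "y \<in> words (m * k)"
    by (simp add: words_def length_concat sum_list_replicate)
next
  fix y :: "'a list" assume "y \<in> words (m * k)"
  then show "y \<in> concat ` {xs \<in> lists (words m). length xs = k}"
  proof (induction k arbitrary: y)
    case 0
    then show ?case by (auto simp: words_def)
  next
    case (Suc k)
    then have "drop m y \<in> words (m * k)" "take m y \<in> words m" by (auto simp: words_def)
    then obtain xs where "drop m y = concat xs" "xs \<in> lists (words m)" "length xs = k"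
      using Suc.IH by blast
    with \<open>take m y \<in> words m\<close> show ?case
      by (intro image_eqI[where x = "take m y # xs"]) (auto simp flip: \<open>drop m y = concat xs\<close>)
  qed
qed

lemma bij_betw_concat_words:
  "bij_betw concat {xs \<in> lists (words m). length xs = k} (words (m * k))"
proof (rule bij_betw_imageI[OF inj_onI concat_image_words])
  fix xs ys :: "'a list list"
  assume xs: "xs \<in> {xs \<in> lists (words m). length xs = k}"
    and ys: "ys \<in> {xs \<in> lists (words m). length xs = k}"
  moreover have "length x = length y" if "(x, y) \<in> set (zip xs ys)" for x y
    using set_zip_leftD[OF that] set_zip_rightD[OF that] xs ys by (auto simp: words_def)
  ultimately show "concat xs = concat ys \<Longrightarrow> xs = ys"
    by (subst (asm) concat_eq_concat_iff) auto
qed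

lemma code_power_eq_image: "code_power C k = concat ` {cs \<in> lists C. length cs = k}"
  by (auto simp: code_power_def)

lemma code_power_subset_words: "C \<subseteq> words n \<Longrightarrow> code_power C k \<subseteq> words (n * k)"
  unfolding code_power_eq_image concat_image_words[symmetric] by blast

lemma bij_betw_nths_code_power:
  assumes C: "C \<subseteq> words n" and bij: "bij_betw (\<lambda>c. nths c I) C (words d)"
  shows "bij_betw (\<lambda>c. nths c (block_indices n k I)) (code_power C k) (words (d * k))"
proof -
  let ?Cs = "{cs \<in> lists C. length cs = k}"
  have "?Cs \<subseteq> {cs \<in> lists (words n). length cs = k}"
    using C lists_mono by blast
  then have concat: "bij_betw concat ?Cs (code_power C k)"
    using bij_betw_concat_words[of n k]
    by (auto simp: code_power_eq_image bij_betw_def intro: inj_on_subset)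
  have "bij_betw (concat \<circ> map (\<lambda>c. nths c I)) ?Cs (words (d * k))"
    using bij_betw_map_lists[OF bij] bij_betw_concat_words by (rule bij_betw_trans)
  moreover have "(concat \<circ> map (\<lambda>c. nths c I)) cs = ((\<lambda>c. nths c (block_indices n k I)) \<circ> concat) cs"
    if "cs \<in> ?Cs" for cs
    using that C nths_concat_block_indices[of cs n I] by (force simp: words_def)
  ultimately have "bij_betw ((\<lambda>c. nths c (block_indices n k I)) \<circ> concat) ?Cs (words (d * k))"
    by (rule bij_betw_cong[THEN iffD1, rotated]) simp
  then show ?thesis
    using bij_betw_comp_iff[OF concat] by blast
qed

lemma balanced_code_code_power:
  assumes "balanced_code n d C"
  shows "balanced_code (n * k) (d * k) (code_power C k)"
proof -
  obtain Is t where C: "C \<subseteq> words n" and "Is \<noteq> []"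
    and sub: "\<And>I. I \<in> set Is \<Longrightarrow> I \<subseteq> {..<n}" and card_I: "\<And>I. I \<in> set Is \<Longrightarrow> card I = d"
    and count: "\<And>i. i < n \<Longrightarrow> length (filter (\<lambda>I. i \<in> I) Is) = t"
    and bij: "\<And>I. I \<in> set Is \<Longrightarrow> bij_betw (\<lambda>c. nths c I) C (words d)"
    using assms by (rule balanced_codeE) blast
  define Is' where "Is' = map (block_indices n k) Is"
  have "\<forall>I\<in>set Is'. I \<subseteq> {0..<n * k} \<and> card I = d * k"
    using sub card_I by (auto simp: Is'_def card_block_indices) (auto simp: block_indices_def)
  moreover have "length (filter (\<lambda>I. i \<in> I) Is') = t" if "i < n * k" for i
  proof -
    have "i mod n < n" using that by (cases n) auto
    moreover have "filter (\<lambda>I. i \<in> block_indices n k I) Is = filter (\<lambda>I. i mod n \<in> I) Is"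
      using that by (simp add: block_indices_def)
    ultimately show ?thesis using count by (simp add: Is'_def filter_map comp_def)
  qed
  moreover have "\<forall>I\<in>set Is'. bij_betw (\<lambda>c. nths c I) (code_power C k) (words (d * k))"
    using bij_betw_nths_code_power[OF C bij] by (auto simp: Is'_def)
  ultimately show ?thesis
    using code_power_subset_words[OF C] \<open>Is \<noteq> []\<close>
    unfolding balanced_code_def by (intro conjI exI[of _ Is'] exI[of _ t] allI impI) (simp_all add: Is'_def)
qed

theorem corollary3p5:
  fixes C :: "('a::{finite, field}) list set"
    and n d n' :: nat and \<delta> :: real
  assumes "balanced_code n d C"
    and "n' > 0"
  shows "balanced_code (n * n') (d * n') (code_power C n') \<and>
    (0 \<le> \<delta> \<and> \<delta> \<le> 1 - 1 / real (CARD('a)) \<longrightarrow>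
      real (card (low_weight_part (code_power C n') \<delta>))
        \<le> real (CARD('a)) powr (real (d * n') * entropy_q (real (CARD('a))) \<delta>))"
proof -
  have "balanced_code (n * n') (d * n') (code_power C n')"
    using assms(1) by (rule balanced_code_code_power)
  then show ?thesis
    using card_low_weight_part_le by blast
qed

end
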